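(* Let $M=(V,E)$ be an untangled multitree and let $\Gamma\subseteq V$ be an admissible subproblem with set of local roots $R(\Gamma)$. Let $H$ be the hypergraph with vertex set $\kappa(\Gamma)$ (the connectors of $M$ lying in $\Gamma$) and hyperedge set $\bigcup_{r\in R(\Gamma)}\mathcal{C}(r)$. Then $H$ decomposes into maximal connected components $H_1=(V_1,\mathcal{E}_1),\dots,H_t=(V_t,\mathcal{E}_t)$ such that: (i) for all $i$, $V_i\in\mathcal{E}_i$ (each maximal connected component is covered by a single one of its hyperedges); (ii) for all $i\neq j$, $V_i\cap V_j=\emptyset$; (iii) for all $r,r'\in R(\Gamma)$ and all $i\in\{1,\dots,t\}$, the families $\mathcal{C}(r)\cap\mathcal{E}_i$ and $\mathcal{C}(r')\cap\mathcal{E}_i$ form a laminar pair.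
   Context: A multitree is a finite directed acyclic graph $M=(V,E)$ such that for every vertex $v$, the subgraph induced by the vertices reachable from $v$ is an arborescence rooted at $v$. A descendant of $u$ is any vertex reachable from $u$ by a directed path (including $u$ itself). A connector is a vertex of in-degree strictly greater than $1$. For $u\in V$, the connector shadow $Sh(u)$ is the set of connectors of $M$ which are descendants of $u$. If $u$ has children $c_1,\dots,c_m$, the child shadows of $u$ is the set family $\mathcal{C}(u)=\{Sh(c_1),\dots,Sh(c_m)\}$. Two set families $\mathcal F,\mathcal F'$ on a common ground set form a laminar pair if for all $U\in\mathcal F$, $W\in\mathcal F'$, either $U\subseteq W$, $W\subseteq U$, or $U\cap W=\emptyset$. $M$ is untangled if for every pair of vertices $u,v$ such that neither is reachable from the other, $\mathcal{C}(u)$ and $\mathcal{C}(v)$ form a laminar pair. A subproblem is a subset $\Gamma\subseteq V$; $M[\Gamma]$ is the induced subgraph and the local roots $R(\Gamma)$ are the roots (in-degree-0 vertices) of $M[\Gamma]$. $\Gamma$ is child-descendant complete if for each vertex $v$ that is a child of a root of $M[\Gamma]$, every descendant of $v$ lies in $\Gamma$. $\Gamma$ is connector complete if for every connector $c$ of $M$, whenever some parent of $c$ lies in $\Gamma$, all parents of $c$ (in $M$) lie in $\Gamma$. $\Gamma$ is admissible if it is both child-descendant complete and connector complete. Maximal connected components of a hypergraph are its connected components, where two vertices are connected if linked by a chain of hyperedges consecutive ones of which intersect; $\mathcal{E}_i$ denotes the hyperedges of $H$ contained in $V_i$. *)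

theory Defs
  imports Main
begin

text \<open>A directed graph is given by a vertex set V and an edge relation E \<subseteq> V \<times> V;
  (p, c) \<in> E means p is a parent of c.\<close>

definition desc :: "('a \<times> 'a) set \<Rightarrow> 'a \<Rightarrow> 'a set" where
  "desc E u = {w. (u, w) \<in> E\<^sup>*}"

definition parents :: "('a \<times> 'a) set \<Rightarrow> 'a \<Rightarrow> 'a set" where
  "parents E c = {p. (p, c) \<in> E}"

definition children :: "('a \<times> 'a) set \<Rightarrow> 'a \<Rightarrow> 'a set" where
  "children E u = {c. (u, c) \<in> E}"

definition arborescence :: "'a set \<Rightarrow> ('a \<times> 'a) set \<Rightarrow> 'a \<Rightarrow> bool" where
  "arborescence S F r \<longleftrightarrow>
     (let F' = F \<inter> (S \<times> S) in
       r \<in> S \<and> (\<forall>w\<in>S. (r, w) \<in> F'\<^sup>*) \<and>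
       card {p. (p, r) \<in> F'} = 0 \<and> finite {p. (p, r) \<in> F'} \<and>
       (\<forall>w\<in>S - {r}. finite {p. (p, w) \<in> F'} \<and> card {p. (p, w) \<in> F'} = 1))"

definition multitree :: "'a set \<Rightarrow> ('a \<times> 'a) set \<Rightarrow> bool" where
  "multitree V E \<longleftrightarrow> finite V \<and> E \<subseteq> V \<times> V \<and> acyclic E \<and>
     (\<forall>v\<in>V. arborescence (desc E v) E v)"

definition connector :: "'a set \<Rightarrow> ('a \<times> 'a) set \<Rightarrow> 'a \<Rightarrow> bool" where
  "connector V E c \<longleftrightarrow> c \<in> V \<and> card (parents E c) > 1"

definition shadow :: "'a set \<Rightarrow> ('a \<times> 'a) set \<Rightarrow> 'a \<Rightarrow> 'a set" where
  "shadow V E u = {c \<in> desc E u. connector V E c}"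

definition child_shadows :: "'a set \<Rightarrow> ('a \<times> 'a) set \<Rightarrow> 'a \<Rightarrow> 'a set set" where
  "child_shadows V E u = shadow V E ` children E u"

definition laminar_pair :: "'a set set \<Rightarrow> 'a set set \<Rightarrow> bool" where
  "laminar_pair F F' \<longleftrightarrow> (\<forall>U\<in>F. \<forall>W\<in>F'. U \<subseteq> W \<or> W \<subseteq> U \<or> U \<inter> W = {})"

definition untangled :: "'a set \<Rightarrow> ('a \<times> 'a) set \<Rightarrow> bool" where
  "untangled V E \<longleftrightarrow> multitree V E \<and>
     (\<forall>u\<in>V. \<forall>v\<in>V. u \<notin> desc E v \<and> v \<notin> desc E u \<longrightarrow>
        laminar_pair (child_shadows V E u) (child_shadows V E v))"

definition local_roots :: "('a \<times> 'a) set \<Rightarrow> 'a set \<Rightarrow> 'a set" where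
  "local_roots E \<Gamma> = {v \<in> \<Gamma>. \<not> (\<exists>p\<in>\<Gamma>. (p, v) \<in> E)}"

definition child_desc_complete :: "('a \<times> 'a) set \<Rightarrow> 'a set \<Rightarrow> bool" where
  "child_desc_complete E \<Gamma> \<longleftrightarrow>
     (\<forall>r\<in>local_roots E \<Gamma>. \<forall>v\<in>children E r. desc E v \<subseteq> \<Gamma>)"

definition connector_complete :: "'a set \<Rightarrow> ('a \<times> 'a) set \<Rightarrow> 'a set \<Rightarrow> bool" where
  "connector_complete V E \<Gamma> \<longleftrightarrow>
     (\<forall>c. connector V E c \<longrightarrow> parents E c \<inter> \<Gamma> \<noteq> {} \<longrightarrow> parents E c \<subseteq> \<Gamma>)"

definition admissible :: "'a set \<Rightarrow> ('a \<times> 'a) set \<Rightarrow> 'a set \<Rightarrow> bool" where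
  "admissible V E \<Gamma> \<longleftrightarrow> \<Gamma> \<subseteq> V \<and> child_desc_complete E \<Gamma> \<and> connector_complete V E \<Gamma>"

definition hconnected :: "'a set set \<Rightarrow> 'a \<Rightarrow> 'a \<Rightarrow> bool" where
  "hconnected \<E> x y \<longleftrightarrow> (\<exists>es. es \<noteq> [] \<and> set es \<subseteq> \<E> \<and> x \<in> hd es \<and> y \<in> last es \<and>
     (\<forall>i. Suc i < length es \<longrightarrow> es ! i \<inter> es ! Suc i \<noteq> {}))"

definition hcomponents :: "'a set \<Rightarrow> 'a set set \<Rightarrow> 'a set set" where
  "hcomponents Vs \<E> = {{y \<in> Vs. hconnected \<E> x y} | x. x \<in> Vs \<and> hconnected \<E> x x}"

definition comp_edges :: "'a set set \<Rightarrow> 'a set \<Rightarrow> 'a set set" where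
  "comp_edges \<E> Vi = {e \<in> \<E>. e \<subseteq> Vi}"

definition connectors_in :: "'a set \<Rightarrow> ('a \<times> 'a) set \<Rightarrow> 'a set \<Rightarrow> 'a set" where
  "connectors_in V E \<Gamma> = {c \<in> \<Gamma>. connector V E c}"

definition root_hyperedges :: "'a set \<Rightarrow> ('a \<times> 'a) set \<Rightarrow> 'a set \<Rightarrow> 'a set set" where
  "root_hyperedges V E \<Gamma> = (\<Union>r\<in>local_roots E \<Gamma>. child_shadows V E r)"

end

theory Submission
  imports Defs
begin

text \<open>Two children of a local root have disjoint descendant sets, because the descendants of
  any vertex form an arborescence; hence the hyperedges of a single root are pairwise disjoint,
  while hyperedges of different roots form laminar pairs by untangledness (distinct local roots
  are incomparable by child-descendant completeness). So the hyperedges form one laminar family.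
  In a finite laminar family every connected component of the hypergraph is exactly the maximal
  hyperedge through any of its vertices, which gives (i) and (ii); (iii) is inherited from the
  laminarity of the whole family.\<close>

lemma multitree_no_cycle:
  assumes "multitree V E" and "(r, c) \<in> E"
  shows "(c, r) \<notin> E\<^sup>*"
  using assms unfolding multitree_def acyclic_def by (meson rtrancl_into_trancl2)

lemma multitree_parent_unique:
  assumes mt: "multitree V E" and rV: "r \<in> V"
    and p: "(r, p) \<in> E\<^sup>*" "(p, w) \<in> E" and q: "(r, q) \<in> E\<^sup>*" "(q, w) \<in> E"
  shows "p = q"
proof -
  let ?F = "E \<inter> (desc E r \<times> desc E r)"
  have "w \<noteq> r"
    using multitree_no_cycle[OF mt p(2)] p(1) by auto
  moreover have "(r, w) \<in> E\<^sup>*"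
    using p by simp
  ultimately have "w \<in> desc E r - {r}"
    by (simp add: desc_def)
  moreover have "arborescence (desc E r) E r"
    using mt rV unfolding multitree_def by blast
  ultimately have "card {x. (x, w) \<in> ?F} = 1"
    unfolding arborescence_def Let_def by blast
  moreover have "p \<in> {x. (x, w) \<in> ?F}" "q \<in> {x. (x, w) \<in> ?F}"
    using p q by (auto simp: desc_def)
  ultimately show ?thesis
    by (metis card_1_singletonE singletonD)
qed

lemma multitree_child_reaches_sibling:
  assumes mt: "multitree V E" and rV: "r \<in> V"
    and c: "(r, c) \<in> E" and c': "(r, c') \<in> E" and reach: "(c', c) \<in> E\<^sup>*"
  shows "c' = c"
proof (rule ccontr)
  assume "c' \<noteq> c"
  then obtain q where q: "(c', q) \<in> E\<^sup>*" "(q, c) \<in> E"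
    using reach by (metis rtranclE)
  have "(r, q) \<in> E\<^sup>*"
    using c' q(1) by (meson converse_rtrancl_into_rtrancl)
  then have "q = r"
    using multitree_parent_unique[OF mt rV _ q(2), of r] c by simp
  then show False
    using multitree_no_cycle[OF mt c'] q(1) by simp
qed

lemma multitree_children_desc_disjoint:
  assumes mt: "multitree V E" and rV: "r \<in> V"
    and c1: "c1 \<in> children E r" and c2: "c2 \<in> children E r" and ne: "c1 \<noteq> c2"
  shows "desc E c1 \<inter> desc E c2 = {}"
proof -
  have rc1: "(r, c1) \<in> E" and rc2: "(r, c2) \<in> E"
    using c1 c2 by (auto simp: children_def)
  have "(c2, w) \<in> E\<^sup>* \<longrightarrow> c1 = c2" if "(c1, w) \<in> E\<^sup>*" for w
    using that
  proof (induction rule: rtrancl_induct)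
    case base
    show ?case
      using multitree_child_reaches_sibling[OF mt rV rc1 rc2] by blast
  next
    case (step y z)
    show ?case
    proof
      assume c2z: "(c2, z) \<in> E\<^sup>*"
      show "c1 = c2"
      proof (cases "z = c2")
        case True
        then have "(c1, c2) \<in> E\<^sup>*"
          using step.hyps by (metis rtrancl.rtrancl_into_rtrancl)
        then show ?thesis
          using multitree_child_reaches_sibling[OF mt rV rc2 rc1] by simp
      next
        case False
        then obtain q where q: "(c2, q) \<in> E\<^sup>*" "(q, z) \<in> E"
          using c2z by (metis rtranclE)
        have "(r, y) \<in> E\<^sup>*" "(r, q) \<in> E\<^sup>*"
          using rc1 rc2 step.hyps(1) q(1) by (meson converse_rtrancl_into_rtrancl)+
        then have "q = y"
          using multitree_parent_unique[OF mt rV _ step.hyps(2) _ q(2)] by simp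
        then show ?thesis
          using step.IH q(1) by simp
      qed
    qed
  qed
  then show ?thesis
    using ne by (auto simp: desc_def)
qed

lemma local_root_not_desc_local_root:
  assumes cdc: "child_desc_complete E \<Gamma>"
    and r: "r \<in> local_roots E \<Gamma>" and r': "r' \<in> local_roots E \<Gamma>" and ne: "r \<noteq> r'"
  shows "r' \<notin> desc E r"
proof
  assume "r' \<in> desc E r"
  then obtain c where c: "(r, c) \<in> E" "(c, r') \<in> E\<^sup>*"
    using ne by (metis converse_rtranclE desc_def mem_Collect_eq)
  have "desc E c \<subseteq> \<Gamma>"
    using cdc r c(1) unfolding child_desc_complete_def children_def by blast
  moreover obtain p where "p = r \<or> (c, p) \<in> E\<^sup>*" "(p, r') \<in> E"
    using c by (metis rtranclE)
  ultimately have "p \<in> \<Gamma>" "(p, r') \<in> E"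
    using r by (auto simp: desc_def local_roots_def)
  then show False
    using r' unfolding local_roots_def by blast
qed

definition laminar :: "'a set set \<Rightarrow> bool" where
  "laminar H \<longleftrightarrow> laminar_pair H H"

definition maximal_member :: "'a set set \<Rightarrow> 'a set \<Rightarrow> bool" where
  "maximal_member H M \<longleftrightarrow> M \<in> H \<and> (\<forall>e\<in>H. M \<subseteq> e \<longrightarrow> e = M)"

lemma laminar_pair_subfamilies:
  "laminar H \<Longrightarrow> F \<subseteq> H \<Longrightarrow> F' \<subseteq> H \<Longrightarrow> laminar_pair F F'"
  unfolding laminar_def laminar_pair_def by (meson subsetD)

lemma laminar_subset_maximal:
  assumes "laminar H" and "maximal_member H M" and "e \<in> H" and "e \<inter> M \<noteq> {}"
  shows "e \<subseteq> M"
proof -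
  have "e \<subseteq> M \<or> M \<subseteq> e \<or> e \<inter> M = {}"
    using assms(1-3) unfolding laminar_def laminar_pair_def maximal_member_def by simp
  then show ?thesis
    using assms(2-4) unfolding maximal_member_def by auto
qed

lemma laminar_maximal_disjoint:
  assumes "laminar H" and "maximal_member H M" and "maximal_member H M'" and "M \<noteq> M'"
  shows "M \<inter> M' = {}"
proof -
  have "M \<subseteq> M' \<or> M' \<subseteq> M \<or> M \<inter> M' = {}"
    using assms(1-3) unfolding laminar_def laminar_pair_def maximal_member_def by simp
  then show ?thesis
    using assms(2-4) unfolding maximal_member_def by auto
qed

lemma hconnected_maximal_closed:
  assumes lam: "laminar H" and max: "maximal_member H M"
    and x: "x \<in> M" and conn: "hconnected H x y"
  shows "y \<in> M"
proof -
  obtain es where es: "es \<noteq> []" "set es \<subseteq> H" "x \<in> hd es" "y \<in> last es"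
    and chain: "\<forall>i. Suc i < length es \<longrightarrow> es ! i \<inter> es ! Suc i \<noteq> {}"
    using conn unfolding hconnected_def by blast
  have "es ! i \<subseteq> M" if "i < length es" for i
    using that
  proof (induction i)
    case 0
    then have "es ! 0 \<in> H" "x \<in> es ! 0"
      using es by (auto simp: hd_conv_nth)
    then show ?case
      using x laminar_subset_maximal[OF lam max] by blast
  next
    case (Suc i)
    then have "es ! Suc i \<in> H" "es ! Suc i \<inter> M \<noteq> {}"
      using chain es(2) by (auto, blast)
    then show ?case
      using laminar_subset_maximal[OF lam max] by blast
  qed
  then have "last es \<subseteq> M"
    using es(1) by (simp add: last_conv_nth)
  then show ?thesis
    using es(4) by blast
qed

lemma hcomponent_laminar_maximal_member:
  assumes fin: "finite H" and lam: "laminar H" and HK: "H \<subseteq> Pow K"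
    and Vi: "Vi \<in> hcomponents K H"
  shows "maximal_member H Vi"
proof -
  obtain x where x: "hconnected H x x" and Vi_eq: "Vi = {y \<in> K. hconnected H x y}"
    using Vi unfolding hcomponents_def by blast
  have "{e \<in> H. x \<in> e} \<noteq> {}"
    using x unfolding hconnected_def by (metis (mono_tags) empty_iff hd_in_set mem_Collect_eq subsetD)
  then obtain M where max: "maximal_member H M" and x_M: "x \<in> M"
    using finite_has_maximal[of "{e \<in> H. x \<in> e}"] fin unfolding maximal_member_def by force
  have "M \<in> H"
    using max unfolding maximal_member_def by simp
  then have "hconnected H x y" if "y \<in> M" for y
    unfolding hconnected_def using x_M that by (intro exI[of _ "[M]"]) simp
  then have "Vi = M"
    using hconnected_maximal_closed[OF lam max x_M] HK \<open>M \<in> H\<close> Vi_eq by blast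
  then show ?thesis
    using max by simp
qed

lemma root_hyperedges_laminar:
  assumes un: "untangled V E" and ad: "admissible V E \<Gamma>"
  shows "laminar (root_hyperedges V E \<Gamma>)"
  unfolding laminar_def laminar_pair_def
proof (intro ballI)
  fix e1 e2 assume "e1 \<in> root_hyperedges V E \<Gamma>" "e2 \<in> root_hyperedges V E \<Gamma>"
  then obtain r1 c1 r2 c2 where
    r1: "r1 \<in> local_roots E \<Gamma>" "c1 \<in> children E r1" "e1 = shadow V E c1" and
    r2: "r2 \<in> local_roots E \<Gamma>" "c2 \<in> children E r2" "e2 = shadow V E c2"
    unfolding root_hyperedges_def child_shadows_def by blast
  have mt: "multitree V E"
    using un unfolding untangled_def by blast
  have rV: "r1 \<in> V" "r2 \<in> V"
    using r1(1) r2(1) ad unfolding local_roots_def admissible_def by auto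
  show "e1 \<subseteq> e2 \<or> e2 \<subseteq> e1 \<or> e1 \<inter> e2 = {}"
  proof (cases "r1 = r2")
    case True
    then have "c1 = c2 \<or> desc E c1 \<inter> desc E c2 = {}"
      using multitree_children_desc_disjoint[OF mt rV(1) r1(2)] r2(2) by blast
    then show ?thesis
      using r1(3) r2(3) unfolding shadow_def by blast
  next
    case False
    have cdc: "child_desc_complete E \<Gamma>"
      using ad unfolding admissible_def by blast
    have "r1 \<notin> desc E r2" "r2 \<notin> desc E r1"
      using local_root_not_desc_local_root[OF cdc] r1(1) r2(1) False by metis+
    then have "laminar_pair (child_shadows V E r1) (child_shadows V E r2)"
      using un rV unfolding untangled_def by blast
    moreover have "e1 \<in> child_shadows V E r1" "e2 \<in> child_shadows V E r2"
      using r1 r2 unfolding child_shadows_def by auto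
    ultimately show ?thesis
      unfolding laminar_pair_def by blast
  qed
qed

lemma root_hyperedges_within_connectors:
  assumes "child_desc_complete E \<Gamma>"
  shows "root_hyperedges V E \<Gamma> \<subseteq> Pow (connectors_in V E \<Gamma>)"
  using assms
  unfolding root_hyperedges_def child_shadows_def child_desc_complete_def shadow_def
    connectors_in_def
  by blast

lemma root_hyperedges_finite:
  assumes "multitree V E" and "child_desc_complete E \<Gamma>"
  shows "finite (root_hyperedges V E \<Gamma>)"
proof -
  have "connectors_in V E \<Gamma> \<subseteq> V"
    unfolding connectors_in_def connector_def by auto
  then show ?thesis
    using assms root_hyperedges_within_connectors unfolding multitree_def
    by (meson finite_Pow_iff finite_subset)
qed

theorem lemma1:
  fixes V :: "'a set" and E :: "('a \<times> 'a) set" and \<Gamma> :: "'a set"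
  assumes "untangled V E"
    and "admissible V E \<Gamma>"
  defines "Hs \<equiv> root_hyperedges V E \<Gamma>"
    and "comps \<equiv> hcomponents (connectors_in V E \<Gamma>) (root_hyperedges V E \<Gamma>)"
  shows "finite comps
    \<and> (\<forall>Vi\<in>comps. Vi \<in> comp_edges Hs Vi)
    \<and> (\<forall>Vi\<in>comps. \<forall>Vj\<in>comps. Vi \<noteq> Vj \<longrightarrow> Vi \<inter> Vj = {})
    \<and> (\<forall>r\<in>local_roots E \<Gamma>. \<forall>r'\<in>local_roots E \<Gamma>. \<forall>Vi\<in>comps.
         laminar_pair (child_shadows V E r \<inter> comp_edges Hs Vi)
                      (child_shadows V E r' \<inter> comp_edges Hs Vi))"
proof -
  have cdc: "child_desc_complete E \<Gamma>"
    using assms(2) unfolding admissible_def by blast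
  have lam: "laminar Hs"
    unfolding Hs_def using root_hyperedges_laminar[OF assms(1,2)] .
  have fin: "finite Hs"
    unfolding Hs_def using assms(1) cdc root_hyperedges_finite unfolding untangled_def by blast
  have within: "Hs \<subseteq> Pow (connectors_in V E \<Gamma>)"
    unfolding Hs_def using root_hyperedges_within_connectors[OF cdc] .
  have comp: "maximal_member Hs Vi" if "Vi \<in> comps" for Vi
    using hcomponent_laminar_maximal_member[OF fin lam within] that
    unfolding comps_def Hs_def by simp
  then have "comps \<subseteq> Hs"
    unfolding maximal_member_def by blast
  then have "finite comps"
    using fin by (rule finite_subset)
  moreover have "\<forall>Vi\<in>comps. Vi \<in> comp_edges Hs Vi"
    using comp by (simp add: comp_edges_def maximal_member_def)
  moreover have "\<forall>Vi\<in>comps. \<forall>Vj\<in>comps. Vi \<noteq> Vj \<longrightarrow> Vi \<inter> Vj = {}"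
    using laminar_maximal_disjoint[OF lam] comp by metis
  moreover have "laminar_pair (F \<inter> comp_edges Hs Vi) (F' \<inter> comp_edges Hs Vi)" for F F' Vi
    by (rule laminar_pair_subfamilies[OF lam]) (auto simp: comp_edges_def)
  ultimately show ?thesis
    by simp
qed

end
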